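(* Let $t,t'$ be even integers and let $B'\in\mathcal X^{t',+}_{N-2}$, $B\in\mathcal X^{t,+}_{N-2}$ with $B'\preceq B$. If $t<0$, then $t'=t$ or $|t'|<|t|$.
   Context: Let $N\ge 3$ be an odd integer and $F=\mathbb Z/2\mathbb Z$. For integers $i,j$ let $[i,j]=\{h\in\mathbb Z: i\le h\le j\}$ (empty if $i>j$). Let $S_N=[1,N]$. The set of all subsets of $S_N$ is an $F$-vector space with sum $X+X'=(X\cup X')-(X\cap X')$; let $E_N$ be the subspace of subsets of even cardinality. A $2$-element subset $\{i,j\}\subseteq S_N$ is written $ij$ when either ($i<j$ and $j-i$ odd) or ($i>j$ and $i-j$ even); each $2$-element subset has exactly one such writing. Let $\mathcal P_N$ be the set of all finite sets $B$ of pairwise disjoint $2$-element subsets of $S_N$; for $B\in\mathcal P_N$ let $\langle B\rangle$ be the $F$-subspace of $E_N$ spanned by the elements of $B$, $\mathrm{supp}(B)=\bigcup_{X\in B}X$, $B^0=\{\{i,j\}\in B: i-j\text{ even}\}$, $B^1=\{\{i,j\}\in B: i-j\text{ odd}\}$. A set $X\subseteq S_N$ is $0$-covered (resp. $1$-covered) by $B^1$ if there are $a_1b_1,\dots,a_sb_s\in B^1$ ($s\ge 0$, so $a_r<b_r$) with $X=[a_1,b_1]\sqcup\dots\sqcup[a_s,b_s]$ (resp. $X=[a_1,b_1]\sqcup\dots\sqcup[a_s,b_s]\sqcup\{u\}$ for some $u$), disjoint unions. Let ${}^*\mathcal P_N$ be the set of $B\in\mathcal P_N$ such that: for every $ij\in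 B^1$ the set $[i+1,j-1]$ is $0$-covered by $B^1$; and there is a sequence $i_*(B)=(i_1,\dots,i_{2s})$ in $S_N$ with $B^0=\{i_{2s}i_1,i_{2s-1}i_2,\dots,i_{s+1}i_s\}$ (so $s=|B^0|$; the sequence is unique) such that, if $s\ge1$, each of $[i_1+1,i_2-1],\dots,[i_{s-1}+1,i_s-1],[i_{s+1}+1,i_{s+2}-1],\dots,[i_{2s-1}+1,i_{2s}-1]$ is $0$-covered by $B^1$. For $B\in{}^*\mathcal P_N$ with $i_*(B)=(i_1,\dots,i_{2s})$ consider: (I) $s=0$, or $s\ge1$ and $[1,i_1-1]$ and $[i_{2s}+1,N]$ are $0$-covered by $B^1$; (II) $N\notin\mathrm{supp}(B)$ and either $s=0$, or $s$ is odd and either (i) $[1,i_1-1]$ is $1$-covered and $[i_{2s}+1,N-1]$ is $0$-covered by $B^1$, or (ii) $[1,i_1-1]$ is $0$-covered and $[i_{2s}+1,N-1]$ is $1$-covered by $B^1$; (III) (I) holds and, if $s$ is even then $\{i,N\}\in B$ for some even $i$, if $s$ is odd then $\{i,N\}\in B$ for some odd $i$. Let $\mathcal X^+_{N-2}$, $\mathcal X^-_{N-2}$ be the sets of $B\in{}^*\mathcal P_N$ satisfying (II), (III) respectively, and $\mathcal X_{N-2}=\mathcal X^+_{N-2}\sqcup\mathcal X^-_{N-2}$. For $B\in\mathcal X^+_{N-2}$ with $s\ge1$ there is a unique $u_B$: in case (i), $u_B\in[1,i_1-1]$ with $[1,u_B-1]$, $[u_B+1,i_1-1]$ $0$-covered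 by $B^1$ ($u_B$ odd); in case (ii), $u_B\in[i_{2s}+1,N-1]$ with $[i_{2s}+1,u_B-1]$, $[u_B+1,N-1]$ $0$-covered by $B^1$ ($u_B$ even). For even $t$: $\mathcal X^{0,+}_{N-2}=\{B\in\mathcal X^+_{N-2}:|B^0|=0\}$; for $t\ge2$, $\mathcal X^{t,+}_{N-2}=\{B\in\mathcal X^+_{N-2}:|B^0|=t-1,\ u_B\text{ odd}\}$; for $t\le-2$, $\mathcal X^{t,+}_{N-2}=\{B\in\mathcal X^+_{N-2}:|B^0|=-t-1,\ u_B\text{ even}\}$. Put $[[ij]]=[i,j]$ if $i<j$ and $[[ij]]=[i,N]\cup[1,j]$ if $i>j$. For $B\in\mathcal X_{N-2}$ define ${}'\epsilon(B)\in E_N$: ${}'\epsilon(B)=\sum_{ij\in B}[[ij]]$ if $B\in\mathcal X^-_{N-2}$ or if $B\in\mathcal X^+_{N-2}$ with $|B^0|=0$; ${}'\epsilon(B)=\sum_{ij\in B}[[ij]]+[u_B,N]$ if $B\in\mathcal X^+_{N-2}$, $|B^0|$ odd, $u_B$ even; ${}'\epsilon(B)=\sum_{ij\in B}[[ij]]+\{N\}+[1,u_B]$ if $B\in\mathcal X^+_{N-2}$, $|B^0|$ odd, $u_B$ odd. For $B,B'\in\mathcal X_{N-2}$ write $B'\preceq B$ if there is a sequence $B'=B_0,\dots,B_h=B$ ($h\ge0$) in $\mathcal X_{N-2}$ with ${}'\epsilon(B_k)\in\langle B_{k+1}\rangle$ for $k=0,\dots,h-1$. *)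

theory Defs
  imports Main
begin

(* Elements of S_N = [1,N] are natural numbers; subsets of S_N are nat sets.
   The F-vector space of subsets: sum is symmetric difference. *)

definition sdiff :: "nat set \<Rightarrow> nat set \<Rightarrow> nat set" where
  "sdiff X Y = (X \<union> Y) - (X \<inter> Y)"

(* F-sum of the family f X, X \<in> B (B finite): x belongs iff it lies in an odd number of them *)
definition fsum :: "(nat set \<Rightarrow> nat set) \<Rightarrow> nat set set \<Rightarrow> nat set" where
  "fsum f B = {x. odd (card {X \<in> B. x \<in> f X})}"

definition span2 :: "nat set set \<Rightarrow> nat set set" where
  "span2 B = {fsum id C | C. C \<subseteq> B}"

definition PN :: "nat \<Rightarrow> nat set set \<Rightarrow> bool" where
  "PN N B \<longleftrightarrow> finite B \<and> (\<forall>X\<in>B. X \<subseteq> {1..N} \<and> card X = 2)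
     \<and> (\<forall>X\<in>B. \<forall>Y\<in>B. X \<noteq> Y \<longrightarrow> X \<inter> Y = {})"

definition supp :: "nat set set \<Rightarrow> nat set" where
  "supp B = \<Union>B"

definition B0 :: "nat set set \<Rightarrow> nat set set" where
  "B0 B = {X \<in> B. \<exists>i j. X = {i, j} \<and> i \<noteq> j \<and> even (int i - int j)}"

definition B1 :: "nat set set \<Rightarrow> nat set set" where
  "B1 B = {X \<in> B. \<exists>i j. X = {i, j} \<and> i \<noteq> j \<and> odd (int i - int j)}"

definition wr :: "nat set \<Rightarrow> nat \<times> nat" where
  "wr X = (if odd (int (Max X) - int (Min X)) then (Min X, Max X) else (Max X, Min X))"

definition ival :: "nat set \<Rightarrow> nat set" where
  "ival X = {Min X..Max X}"

definition cov0 :: "nat set set \<Rightarrow> nat set \<Rightarrow> bool" where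
  "cov0 B X \<longleftrightarrow> (\<exists>C \<subseteq> B1 B. (\<forall>p\<in>C. \<forall>q\<in>C. p \<noteq> q \<longrightarrow> ival p \<inter> ival q = {})
       \<and> X = \<Union>(ival ` C))"

definition cov1 :: "nat set set \<Rightarrow> nat set \<Rightarrow> bool" where
  "cov1 B X \<longleftrightarrow> (\<exists>C \<subseteq> B1 B. \<exists>u. (\<forall>p\<in>C. \<forall>q\<in>C. p \<noteq> q \<longrightarrow> ival p \<inter> ival q = {})
       \<and> u \<notin> \<Union>(ival ` C) \<and> X = \<Union>(ival ` C) \<union> {u})"

(* xs = (i_1,...,i_{2s}) (0-indexed list), an increasing sequence in S_N with
   B^0 = {i_{2s}i_1, ..., i_{s+1}i_s} and the intermediate intervals 0-covered *)
definition seq_ok :: "nat \<Rightarrow> nat set set \<Rightarrow> nat list \<Rightarrow> bool" where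
  "seq_ok N B xs \<longleftrightarrow> (let s = length xs div 2 in
      even (length xs) \<and> sorted_wrt (<) xs \<and> set xs \<subseteq> {1..N}
      \<and> B0 B = {{xs ! (2*s - 1 - k), xs ! k} | k. k < s}
      \<and> (\<forall>k. k + 1 < 2*s \<and> k \<noteq> s - 1 \<longrightarrow> cov0 B {xs ! k + 1 .. xs ! (k+1) - 1}))"

definition starP :: "nat \<Rightarrow> nat set set \<Rightarrow> bool" where
  "starP N B \<longleftrightarrow> PN N B
     \<and> (\<forall>X\<in>B1 B. cov0 B {Min X + 1 .. Max X - 1})
     \<and> (\<exists>xs. seq_ok N B xs)"

definition istar :: "nat \<Rightarrow> nat set set \<Rightarrow> nat list" where
  "istar N B = (THE xs. seq_ok N B xs)"

definition condI :: "nat \<Rightarrow> nat set set \<Rightarrow> bool" where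
  "condI N B \<longleftrightarrow> (let xs = istar N B; s = card (B0 B) in
     s = 0 \<or> (s \<ge> 1 \<and> cov0 B {1 .. hd xs - 1} \<and> cov0 B {last xs + 1 .. N}))"

definition caseI :: "nat \<Rightarrow> nat set set \<Rightarrow> bool" where
  "caseI N B \<longleftrightarrow> (let xs = istar N B in
     cov1 B {1 .. hd xs - 1} \<and> cov0 B {last xs + 1 .. N - 1})"

definition caseII :: "nat \<Rightarrow> nat set set \<Rightarrow> bool" where
  "caseII N B \<longleftrightarrow> (let xs = istar N B in
     cov0 B {1 .. hd xs - 1} \<and> cov1 B {last xs + 1 .. N - 1})"

definition condII :: "nat \<Rightarrow> nat set set \<Rightarrow> bool" where
  "condII N B \<longleftrightarrow> N \<notin> supp B \<and> (let s = card (B0 B) in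
     s = 0 \<or> (odd s \<and> (caseI N B \<or> caseII N B)))"

definition condIII :: "nat \<Rightarrow> nat set set \<Rightarrow> bool" where
  "condIII N B \<longleftrightarrow> condI N B \<and> (let s = card (B0 B) in
     (even s \<longrightarrow> (\<exists>i. even i \<and> {i, N} \<in> B)) \<and> (odd s \<longrightarrow> (\<exists>i. odd i \<and> {i, N} \<in> B)))"

definition Xplus :: "nat \<Rightarrow> nat set set set" where
  "Xplus N = {B. starP N B \<and> condII N B}"

definition Xminus :: "nat \<Rightarrow> nat set set set" where
  "Xminus N = {B. starP N B \<and> condIII N B}"

definition XX :: "nat \<Rightarrow> nat set set set" where
  "XX N = Xplus N \<union> Xminus N"

(* u_B for B \<in> X^+ with s \<ge> 1 *)
definition uB :: "nat \<Rightarrow> nat set set \<Rightarrow> nat" where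
  "uB N B = (let xs = istar N B in THE u.
      (caseI N B \<and> u \<in> {1 .. hd xs - 1} \<and> cov0 B {1 .. u - 1} \<and> cov0 B {u + 1 .. hd xs - 1})
    \<or> (caseII N B \<and> u \<in> {last xs + 1 .. N - 1} \<and> cov0 B {last xs + 1 .. u - 1} \<and> cov0 B {u + 1 .. N - 1}))"

definition Xtp :: "nat \<Rightarrow> int \<Rightarrow> nat set set set" where
  "Xtp N t = {B \<in> Xplus N.
      (t = 0 \<and> card (B0 B) = 0)
    \<or> (t \<ge> 2 \<and> int (card (B0 B)) = t - 1 \<and> odd (uB N B))
    \<or> (t \<le> -2 \<and> int (card (B0 B)) = - t - 1 \<and> even (uB N B))}"

definition dbr :: "nat \<Rightarrow> nat set \<Rightarrow> nat set" where
  "dbr N X = (case wr X of (i, j) \<Rightarrow> if i < j then {i..j} else {i..N} \<union> {1..j})"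

definition eps' :: "nat \<Rightarrow> nat set set \<Rightarrow> nat set" where
  "eps' N B = (if B \<in> Xminus N \<or> (B \<in> Xplus N \<and> card (B0 B) = 0) then fsum (dbr N) B
     else if B \<in> Xplus N \<and> odd (card (B0 B)) \<and> even (uB N B)
       then sdiff (fsum (dbr N) B) {uB N B .. N}
     else if B \<in> Xplus N \<and> odd (card (B0 B)) \<and> odd (uB N B)
       then sdiff (sdiff (fsum (dbr N) B) {N}) {1 .. uB N B}
     else undefined)"

definition step :: "nat \<Rightarrow> nat set set \<Rightarrow> nat set set \<Rightarrow> bool" where
  "step N A C \<longleftrightarrow> A \<in> XX N \<and> C \<in> XX N \<and> eps' N A \<in> span2 C"

definition preceq :: "nat \<Rightarrow> nat set set \<Rightarrow> nat set set \<Rightarrow> bool" where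
  "preceq N B' B \<longleftrightarrow> B' \<in> XX N \<and> B \<in> XX N \<and> (step N)\<^sup>*\<^sup>* B' B"

end

theory Submission
  imports Defs
begin

(* Give y in [1,N] the sign +1 if y is odd and -1 if y is even, and let weight E be the sum of the
   signs of the elements of E.  A pair of B^1 has weight 0.  Every 0-covered interval has even
   length, so the left ends i_1 < ... < i_s of the pairs of B^0 alternate in parity, and the pair
   i_{2s+1-k} i_k has weight 2 sign(i_1) (-1)^(k-1).  Hence every element E of <C> has weight
   2 sign(i_1) times a partial alternating sum, whereas counting the brackets [[ij]] through each
   point gives weight 'epsilon(C) = sign(i_1) (s + 1) for odd s and -s for even s, the value that
   maximises |1 - 2 weight| among those sums.  So |1 - 2 weight 'epsilon(-)| can only grow along a
   chain B' = B_0, ..., B_h = B.  For B in X^{t,+}_{N-2} one finds weight 'epsilon(B) = -t, and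
   |1 + 2t'| <= |1 + 2t| with t < 0 forces t' = t or |t'| < |t|. *)

section \<open>Pairs of B and their brackets\<close>

lemma card_2_obtain_less:
  assumes "card X = 2"
  obtains a b :: nat where "X = {a, b}" "a < b" "Min X = a" "Max X = b"
proof -
  obtain x y where "X = {x, y}" "x \<noteq> y"
    using card_2_iff[THEN iffD1, OF assms] by blast
  then show thesis
    using that[of x y] that[of y x] by (cases "x < y") (auto simp: insert_commute)
qed

lemma PN_pairE:
  assumes "PN N B" "X \<in> B"
  obtains a b where "X = {a, b}" "a < b" "Min X = a" "Max X = b"
proof -
  have "card X = 2"
    using assms by (simp add: PN_def)
  then show thesis
    using that by (rule card_2_obtain_less)
qed

lemma PN_subset: "PN N B \<Longrightarrow> X \<in> B \<Longrightarrow> X \<subseteq> {1..N}"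
  by (simp add: PN_def)

lemma PN_Union_subset: "PN N B \<Longrightarrow> \<Union>B \<subseteq> {1..N}"
  by (auto simp: PN_def)

lemma PN_disjoint: "PN N B \<Longrightarrow> X \<in> B \<Longrightarrow> Y \<in> B \<Longrightarrow> X \<noteq> Y \<Longrightarrow> X \<inter> Y = {}"
  by (simp add: PN_def)

lemma starP_PN: "starP N B \<Longrightarrow> PN N B"
  by (simp add: starP_def)

lemma B1_subset: "B1 B \<subseteq> B"
  by (auto simp: B1_def)

lemma B1_iff:
  assumes "PN N B" "X \<in> B"
  shows "X \<in> B1 B \<longleftrightarrow> odd (Max X - Min X)"
proof -
  obtain a b where ab: "X = {a, b}" "a < b" "Min X = a" "Max X = b"
    using assms by (rule PN_pairE)
  have "X \<in> B1 B \<longleftrightarrow> odd (int b - int a)"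
    using assms(2) ab(1,2) unfolding B1_def by (auto simp: doubleton_eq_iff)
  then show ?thesis
    unfolding ab(3,4) using ab(2) by presburger
qed

lemma B0_eq_diff_B1:
  assumes "PN N B"
  shows "B0 B = B - B1 B"
proof -
  have "X \<in> B0 B \<longleftrightarrow> even (Max X - Min X)" if X: "X \<in> B" for X
  proof -
    obtain a b where ab: "X = {a, b}" "a < b" "Min X = a" "Max X = b"
      using assms X by (rule PN_pairE)
    have "X \<in> B0 B \<longleftrightarrow> even (int b - int a)"
      using X ab(1,2) unfolding B0_def by (auto simp: doubleton_eq_iff)
    then show ?thesis
      unfolding ab(3,4) using ab(2) by presburger
  qed
  then show ?thesis
    using B1_iff[OF assms] by (auto simp: B0_def)
qed

lemma B1_pairE:
  assumes "PN N B" "X \<in> B1 B"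
  obtains a b where "X = {a, b}" "a < b" "Min X = a" "Max X = b" "ival X = {a..b}"
proof -
  have "X \<in> B"
    using assms(2) B1_subset by blast
  with assms(1) obtain a b where "X = {a, b}" "a < b" "Min X = a" "Max X = b"
    by (rule PN_pairE)
  then show thesis
    using that by (simp add: ival_def)
qed

lemma dbr_B1:
  assumes "PN N B" "X \<in> B1 B"
  shows "dbr N X = ival X"
proof -
  have "X \<in> B"
    using assms(2) B1_subset by blast
  then have "odd (Max X - Min X)"
    using assms B1_iff by blast
  moreover obtain a b where "X = {a, b}" "a < b" "Min X = a" "Max X = b"
    using assms by (rule B1_pairE)
  ultimately show ?thesis
    by (auto simp: dbr_def wr_def ival_def)
qed

lemma dbr_B0:
  assumes "PN N B" "X \<in> B0 B"
  shows "dbr N X = {Max X..N} \<union> {1..Min X}"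
proof -
  have X: "X \<in> B" "X \<notin> B1 B"
    using assms B0_eq_diff_B1 by blast+
  obtain a b where ab: "X = {a, b}" "a < b" "Min X = a" "Max X = b"
    using assms(1) X(1) by (rule PN_pairE)
  moreover have "even (b - a)"
    using B1_iff[OF assms(1) X(1)] X(2) ab by auto
  ultimately show ?thesis
    by (auto simp: dbr_def wr_def)
qed

lemma dbr_subset:
  assumes "PN N B" "X \<in> B"
  shows "dbr N X \<subseteq> {1..N}"
proof -
  obtain a b where "X = {a, b}" "a < b" "Min X = a" "Max X = b"
    using assms by (rule PN_pairE)
  moreover have "X \<subseteq> {1..N}"
    using assms by (rule PN_subset)
  ultimately show ?thesis
    using dbr_B1[OF assms(1)] dbr_B0[OF assms(1)] B0_eq_diff_B1[OF assms(1)] assms(2)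
    by (cases "X \<in> B1 B") (auto simp: ival_def)
qed

section \<open>Coverings by B1\<close>

lemma cov0E:
  assumes "cov0 B I"
  obtains C where "C \<subseteq> B1 B" "I = \<Union>(ival ` C)"
  using assms unfolding cov0_def by blast

lemma B1_ival_subset:
  assumes st: "starP N B" and X: "X \<in> B1 B"
  shows "ival X \<subseteq> \<Union>(B1 B)"
  using X
proof (induction "Max X - Min X" arbitrary: X rule: less_induct)
  case less
  obtain a b where ab: "X = {a, b}" "a < b" "Min X = a" "Max X = b" "ival X = {a..b}"
    using starP_PN[OF st] less.prems by (rule B1_pairE)
  have "cov0 B {a+1..b-1}"
    using st less.prems ab(3,4) unfolding starP_def by blast
  then obtain C where C: "C \<subseteq> B1 B" "{a+1..b-1} = \<Union>(ival ` C)"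
    by (rule cov0E)
  have "ival p \<subseteq> \<Union>(B1 B)" if "p \<in> C" for p
  proof -
    have p: "p \<in> B1 B"
      using that C(1) by blast
    obtain c d where cd: "p = {c, d}" "c < d" "Min p = c" "Max p = d" "ival p = {c..d}"
      using starP_PN[OF st] p by (rule B1_pairE)
    have "{c..d} \<subseteq> {a+1..b-1}"
      using C(2) that cd(5) by blast
    then have "Max p - Min p < Max X - Min X"
      using cd ab by auto
    then show ?thesis
      using p by (rule less.hyps)
  qed
  then have "{a+1..b-1} \<subseteq> \<Union>(B1 B)"
    using C(2) by blast
  moreover have "{a, b} \<subseteq> \<Union>(B1 B)"
    using less.prems ab(1) by blast
  moreover have "{a..b} \<subseteq> {a, b} \<union> {a+1..b-1}"
    by auto
  ultimately show ?case
    unfolding ab(5) by blast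
qed

lemma cov0_subset_Union_B1: "starP N B \<Longrightarrow> cov0 B I \<Longrightarrow> I \<subseteq> \<Union>(B1 B)"
  by (elim cov0E) (use B1_ival_subset in blast)

lemma cov0_free: "starP N B \<Longrightarrow> cov0 B I \<Longrightarrow> y \<notin> \<Union>B \<Longrightarrow> y \<notin> I"
  using cov0_subset_Union_B1 B1_subset by blast

lemma dbr_B1_subset: "starP N B \<Longrightarrow> X \<in> B1 B \<Longrightarrow> dbr N X \<subseteq> \<Union>(B1 B)"
  using dbr_B1[OF starP_PN] B1_ival_subset by blast

lemma B1_ends_same_side:
  assumes "starP N B" "X \<in> B1 B" "u \<notin> \<Union>(B1 B)"
  shows "Min X < u \<longleftrightarrow> Max X < u" "Min X \<le> u \<longleftrightarrow> Max X \<le> u"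
proof -
  obtain a b where ab: "a < b" "Min X = a" "Max X = b" "ival X = {a..b}"
    using starP_PN[OF assms(1)] assms(2) by (rule B1_pairE)
  have "u \<notin> {a..b}"
    using B1_ival_subset[OF assms(1,2)] assms(3) ab(4) by blast
  then show "Min X < u \<longleftrightarrow> Max X < u" "Min X \<le> u \<longleftrightarrow> Max X \<le> u"
    using ab by auto
qed

lemma B1_no_crossing:
  assumes st: "starP N B" and X: "X \<in> B1 B" and Y: "Y \<in> B1 B"
  shows "\<not> (Min X < Min Y \<and> Min Y < Max X \<and> Max X < Max Y)"
  using X
proof (induction "Max X - Min X" arbitrary: X rule: less_induct)
  case less
  have pn: "PN N B"
    using st by (rule starP_PN)
  show ?case
  proof
    assume cross: "Min X < Min Y \<and> Min Y < Max X \<and> Max X < Max Y"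
    have "cov0 B {Min X + 1..Max X - 1}"
      using st less.prems unfolding starP_def by blast
    then obtain C where C: "C \<subseteq> B1 B" "{Min X + 1..Max X - 1} = \<Union>(ival ` C)"
      by (rule cov0E)
    moreover have "Min Y \<in> {Min X + 1..Max X - 1}"
      using cross by auto
    ultimately obtain p where p: "p \<in> C" "Min Y \<in> ival p"
      by blast
    have pB1: "p \<in> B1 B"
      using p(1) C(1) by blast
    obtain c d where cd: "p = {c, d}" "c < d" "Min p = c" "Max p = d" "ival p = {c..d}"
      using pn pB1 by (rule B1_pairE)
    have inside: "{c..d} \<subseteq> {Min X + 1..Max X - 1}"
      using C(2) p(1) cd(5) by blast
    then have "Min X < c" "d < Max X"
      using cd(2) by auto
    then have "p \<noteq> Y"
      using cross cd(4) by auto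
    then have "p \<inter> Y = {}"
      using PN_disjoint[OF pn] pB1 Y B1_subset by blast
    moreover have "Min Y \<in> Y"
      using Y pn by (metis B1_pairE insertI1)
    ultimately have "c < Min Y" "Min Y < d"
      using p(2) cd by auto
    have "Max p - Min p < Max X - Min X"
      using \<open>Min X < c\<close> \<open>d < Max X\<close> cd by auto
    then have "\<not> (Min p < Min Y \<and> Min Y < Max p \<and> Max p < Max Y)"
      using pB1 by (rule less.hyps)
    then show False
      using \<open>c < Min Y\<close> \<open>Min Y < d\<close> \<open>d < Max X\<close> cross cd by auto
  qed
qed

lemma cov0_covering_pair:
  assumes pn: "PN N B" and cv: "cov0 B I" and Y: "Y \<in> B1 B"
    and z: "z \<in> Y" "z \<in> I" and nsub: "\<not> Y \<subseteq> I"
  obtains p where "p \<in> B1 B" "Min p < z" "z < Max p" "ival p \<subseteq> I"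
proof -
  obtain C where C: "C \<subseteq> B1 B" "I = \<Union>(ival ` C)"
    using cv by (rule cov0E)
  then obtain p where p: "p \<in> C" "z \<in> ival p"
    using z(2) by blast
  have pB1: "p \<in> B1 B" and sub: "ival p \<subseteq> I"
    using p(1) C by auto
  obtain c d where cd: "p = {c, d}" "c < d" "Min p = c" "Max p = d" "ival p = {c..d}"
    using pn pB1 by (rule B1_pairE)
  have "p \<subseteq> ival p"
    using cd by auto
  then have "p \<noteq> Y"
    using sub nsub by blast
  then have "z \<notin> p"
    using PN_disjoint[OF pn] pB1 Y B1_subset z(1) by blast
  then have "Min p < z" "z < Max p"
    using p(2) cd by auto
  then show thesis
    by (rule that[OF pB1 _ _ sub])
qed

lemma B1_card_ival_even:
  assumes "PN N B" "p \<in> B1 B"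
  shows "even (card (ival p))"
proof -
  have "p \<in> B"
    using assms(2) B1_subset by blast
  then have "odd (Max p - Min p)"
    using assms B1_iff by blast
  moreover obtain a b where "Min p = a" "Max p = b" "a < b" "ival p = {a..b}"
    using assms by (rule B1_pairE)
  ultimately show ?thesis
    by simp
qed

lemma cov0_card_even:
  assumes pn: "PN N B" and cv: "cov0 B I"
  shows "even (card I)"
proof -
  obtain C where C: "C \<subseteq> B1 B" "I = \<Union>(ival ` C)"
    "\<forall>p\<in>C. \<forall>q\<in>C. p \<noteq> q \<longrightarrow> ival p \<inter> ival q = {}"
    using cv unfolding cov0_def by blast
  have "finite C"
    using finite_subset[OF C(1)] finite_subset[OF B1_subset] pn by (simp add: PN_def)
  then have "card I = (\<Sum>p\<in>C. card (ival p))"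
    unfolding C(2) using C(3) by (intro card_UN_disjoint) (auto simp: ival_def)
  moreover have "even (card (ival p))" if "p \<in> C" for p
    using B1_card_ival_even[OF pn] that C(1) by blast
  ultimately show ?thesis
    by (simp add: dvd_sum)
qed

(* The point u_B of the paper: the uncovered point of a 1-covering of [lo, hi]. *)
definition split_point :: "nat set set \<Rightarrow> nat \<Rightarrow> nat \<Rightarrow> nat \<Rightarrow> bool" where
  "split_point B lo hi u \<longleftrightarrow> u \<in> {lo..hi} \<and> cov0 B {lo..u - 1} \<and> cov0 B {u + 1..hi}"

lemma UN_ival_split:
  assumes "u \<notin> \<Union>(ival ` C)"
  shows "\<Union>(ival ` C) \<inter> {..<u} = \<Union>(ival ` {p\<in>C. Max p < u})"
    and "\<Union>(ival ` C) \<inter> {u<..} = \<Union>(ival ` {p\<in>C. u < Min p})"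
proof -
  have "Max p < u \<or> u < Min p" if "p \<in> C" for p
    using assms that by (auto simp: ival_def)
  then show "\<Union>(ival ` C) \<inter> {..<u} = \<Union>(ival ` {p\<in>C. Max p < u})"
    and "\<Union>(ival ` C) \<inter> {u<..} = \<Union>(ival ` {p\<in>C. u < Min p})"
    unfolding ival_def by fastforce+
qed

lemma cov1_split_point:
  assumes cv: "cov1 B {lo..hi}" and lo: "1 \<le> lo"
  obtains u where "split_point B lo hi u"
proof -
  obtain C u where C: "C \<subseteq> B1 B" "\<forall>p\<in>C. \<forall>q\<in>C. p \<noteq> q \<longrightarrow> ival p \<inter> ival q = {}"
    "u \<notin> \<Union>(ival ` C)" "{lo..hi} = \<Union>(ival ` C) \<union> {u}"
    using cv unfolding cov1_def by (elim exE conjE) (rule that)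
  have cov0_sub: "cov0 B (\<Union>(ival ` C'))" if "C' \<subseteq> C" for C'
    unfolding cov0_def using C(1,2) that by (intro exI[of _ C']) blast
  have u: "u \<in> {lo..hi}"
    using C(4) by blast
  have "{lo..u - 1} = {lo..hi} \<inter> {..<u}"
    using u lo by auto
  also have "\<dots> = \<Union>(ival ` C) \<inter> {..<u}"
    unfolding C(4) by auto
  finally have "cov0 B {lo..u - 1}"
    unfolding UN_ival_split(1)[OF C(3)] by (simp add: cov0_sub)
  have "{u + 1..hi} = {lo..hi} \<inter> {u<..}"
    using u by auto
  also have "\<dots> = \<Union>(ival ` C) \<inter> {u<..}"
    unfolding C(4) by auto
  finally have "cov0 B {u + 1..hi}"
    unfolding UN_ival_split(2)[OF C(3)] by (simp add: cov0_sub)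
  then show thesis
    using that u \<open>cov0 B {lo..u - 1}\<close> unfolding split_point_def by blast
qed

lemma cov1_card_odd:
  assumes pn: "PN N B" and cv: "cov1 B {lo..hi}" and lo: "1 \<le> lo"
  shows "odd (card {lo..hi})"
proof -
  obtain u where "split_point B lo hi u"
    using cv lo by (rule cov1_split_point)
  then have u: "u \<in> {lo..hi}" "cov0 B {lo..u - 1}" "cov0 B {u + 1..hi}"
    unfolding split_point_def by blast+
  have "even (u - lo)" "even (hi - u)"
    using cov0_card_even[OF pn u(2)] cov0_card_even[OF pn u(3)] u(1) lo by simp_all
  then show ?thesis
    using u(1) by simp
qed

lemma split_point_not_Min_B1:
  assumes st: "starP N B" and sp: "split_point B lo hi u" and hi: "hi + 1 \<notin> \<Union>(B1 B)"
    and Y: "Y \<in> B1 B"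
  shows "u \<noteq> Min Y"
proof
  assume u: "u = Min Y"
  have pn: "PN N B"
    using st by (rule starP_PN)
  obtain a b where ab: "Y = {a, b}" "a < b" "Min Y = a" "Max Y = b" "ival Y = {a..b}"
    using pn Y by (rule B1_pairE)
  have "u \<le> hi" and c2: "cov0 B {u + 1..hi}"
    using sp by (auto simp: split_point_def)
  moreover have "hi + 1 \<notin> {a..b}"
    using hi B1_ival_subset[OF st Y] ab(5) by blast
  ultimately have "b \<in> {u + 1..hi}" "\<not> Y \<subseteq> {u + 1..hi}"
    using u ab by auto
  then obtain p where p: "p \<in> B1 B" "Min p < b" "b < Max p" "ival p \<subseteq> {u + 1..hi}"
    using cov0_covering_pair[OF pn c2 Y] ab(1) by blast
  then have "a < Min p"
    using u ab(3) by (auto simp: ival_def)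
  then show False
    using B1_no_crossing[OF st Y p(1)] p ab by auto
qed

lemma split_point_not_Max_B1:
  assumes st: "starP N B" and sp: "split_point B lo hi u" and lo: "lo - 1 \<notin> \<Union>(B1 B)"
    and Y: "Y \<in> B1 B"
  shows "u \<noteq> Max Y"
proof
  assume u: "u = Max Y"
  have pn: "PN N B"
    using st by (rule starP_PN)
  obtain a b where ab: "Y = {a, b}" "a < b" "Min Y = a" "Max Y = b" "ival Y = {a..b}"
    using pn Y by (rule B1_pairE)
  have "lo \<le> u" and c1: "cov0 B {lo..u - 1}"
    using sp by (auto simp: split_point_def)
  moreover have "lo - 1 \<notin> {a..b}"
    using lo B1_ival_subset[OF st Y] ab(5) by blast
  ultimately have "a \<in> {lo..u - 1}" "\<not> Y \<subseteq> {lo..u - 1}"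
    using u ab by auto
  then obtain p where p: "p \<in> B1 B" "Min p < a" "a < Max p" "ival p \<subseteq> {lo..u - 1}"
    using cov0_covering_pair[OF pn c1 Y] ab(1) by blast
  then have "Max p < b"
    using u ab(4) by (auto simp: ival_def)
  then show False
    using B1_no_crossing[OF st p(1) Y] p ab by auto
qed

lemma split_point_free:
  assumes st: "starP N B" and sp: "split_point B lo hi u"
    and lo: "lo - 1 \<notin> \<Union>(B1 B)" and hi: "hi + 1 \<notin> \<Union>(B1 B)"
  shows "u \<notin> \<Union>(B1 B)"
proof
  assume "u \<in> \<Union>(B1 B)"
  then obtain Y where Y: "Y \<in> B1 B" "u \<in> Y"
    by blast
  moreover obtain a b where "Y = {a, b}" "Min Y = a" "Max Y = b"
    using starP_PN[OF st] Y(1) by (rule B1_pairE)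
  ultimately show False
    using split_point_not_Min_B1[OF st sp hi Y(1)] split_point_not_Max_B1[OF st sp lo Y(1)] by auto
qed

lemma split_point_unique:
  assumes st: "starP N B" and lo: "lo - 1 \<notin> \<Union>(B1 B)" and hi: "hi + 1 \<notin> \<Union>(B1 B)"
    and u: "split_point B lo hi u" and v: "split_point B lo hi v"
  shows "u = v"
proof -
  have "\<not> y < x" if x: "split_point B lo hi x" and y: "split_point B lo hi y" for x y
  proof
    assume "y < x"
    then have "x \<in> {y + 1..hi}"
      using x unfolding split_point_def by auto
    then have "x \<in> \<Union>(B1 B)"
      using cov0_subset_Union_B1[OF st] y unfolding split_point_def by blast
    then show False
      using split_point_free[OF st x lo hi] by blast
  qed
  then show ?thesis
    using u v by (meson linorder_neqE_nat)
qed

lemma not_caseI_and_caseII: "starP N B \<Longrightarrow> \<not> (caseI N B \<and> caseII N B)"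
  using cov1_card_odd cov0_card_even starP_PN unfolding caseI_def caseII_def Let_def by blast

section \<open>Weights\<close>

lemma sdiff_empty: "sdiff A {} = A"
  by (simp add: sdiff_def)

lemma sdiff_sdiff: "X \<inter> Y = {} \<Longrightarrow> sdiff (sdiff A X) Y = sdiff A (X \<union> Y)"
  by (auto simp: sdiff_def)

lemma fsum_id_disjoint:
  assumes "\<forall>X\<in>S. \<forall>Y\<in>S. X \<noteq> Y \<longrightarrow> X \<inter> Y = {}"
  shows "fsum id S = \<Union>S"
proof (rule set_eqI)
  fix x
  show "x \<in> fsum id S \<longleftrightarrow> x \<in> \<Union>S"
  proof (cases "x \<in> \<Union>S")
    case True
    then obtain X where "X \<in> S" "x \<in> X"
      by blast
    with assms have single: "{X\<in>S. x \<in> X} = {X}"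
      by blast
    show ?thesis
      using True unfolding fsum_def id_def mem_Collect_eq single by simp
  next
    case False
    then have none: "{X\<in>S. x \<in> X} = {}"
      by blast
    show ?thesis
      using False unfolding fsum_def id_def mem_Collect_eq none by simp
  qed
qed

definition parity_sign :: "nat \<Rightarrow> int" where
  "parity_sign y = (if odd y then 1 else -1)"

definition weight :: "nat set \<Rightarrow> int" where
  "weight E = (\<Sum>y\<in>E. parity_sign y)"

lemma parity_sign_cases: "parity_sign y = 1 \<or> parity_sign y = -1"
  by (simp add: parity_sign_def)

lemma weight_B1:
  assumes "PN N B" "X \<in> B1 B"
  shows "weight X = 0"
proof -
  obtain a b where ab: "X = {a, b}" "a < b" "Min X = a" "Max X = b"
    using assms by (rule B1_pairE)
  moreover have "odd (b - a)"
    using assms B1_iff B1_subset ab by fastforce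
  ultimately show ?thesis
    by (auto simp: weight_def parity_sign_def)
qed

lemma weight_Union:
  assumes "PN N B" "S \<subseteq> B"
  shows "weight (\<Union>S) = (\<Sum>X\<in>S. weight X)"
proof -
  have "\<forall>X\<in>S. finite X"
    using assms PN_subset finite_subset by (metis finite_atLeastAtMost subsetD)
  moreover have "\<forall>X\<in>S. \<forall>Y\<in>S. X \<noteq> Y \<longrightarrow> X \<inter> Y = {}"
    using assms PN_disjoint by blast
  ultimately show ?thesis
    unfolding weight_def by (simp add: sum.Union_disjoint)
qed

lemma weight_eq_sum_inter:
  assumes "PN N B" "M \<subseteq> \<Union>B"
  shows "weight M = (\<Sum>X\<in>B. weight (M \<inter> X))"
proof -
  have "finite B" "\<forall>X\<in>B. finite X"
    using assms(1) PN_subset[OF assms(1)] by (auto simp: PN_def intro: finite_subset)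
  moreover have M: "M = (\<Union>X\<in>B. M \<inter> X)"
    using assms(2) by blast
  ultimately show ?thesis
    unfolding weight_def using PN_disjoint[OF assms(1)]
    by (subst M, subst sum.UNION_disjoint) blast+
qed

lemma mem_sdiff_fsum_iff: "y \<in> sdiff (fsum f B) K \<longleftrightarrow> odd (card {X\<in>B. y \<in> f X}) \<noteq> (y \<in> K)"
  by (auto simp: sdiff_def fsum_def)

lemma sum_alternating_bounds:
  "K \<subseteq> {..<s} \<Longrightarrow>
    - int (s div 2) \<le> (\<Sum>k\<in>K. (-1::int) ^ k) \<and> (\<Sum>k\<in>K. (-1::int) ^ k) \<le> int ((s + 1) div 2)"
proof (induction s arbitrary: K)
  case (Suc s)
  have "finite K"
    using Suc.prems finite_subset by blast
  then have split: "(\<Sum>k\<in>K. (-1::int) ^ k) = (\<Sum>k\<in>K - {s}. (-1) ^ k) + (if s \<in> K then (-1) ^ s else 0)"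
    by (simp add: sum.remove)
  have "K - {s} \<subseteq> {..<s}"
    using Suc.prems by auto
  note IH = Suc.IH[OF this]
  show ?case
  proof (cases "even s")
    case True
    then obtain m where "s = 2 * m"
      by blast
    then show ?thesis
      using IH unfolding split by auto
  next
    case False
    then obtain m where "s = 2 * m + 1"
      by (blast elim: oddE)
    then show ?thesis
      using IH unfolding split by auto
  qed
qed simp

lemma sum_alternating_odd_distance:
  "2 * (\<Sum>k<s. if odd (s - k) then (-1::int) ^ k else 0) = (if odd s then int s + 1 else - int s)"
proof (induction s)
  case (Suc s)
  have "(\<Sum>k<s. if odd (Suc s - k) then (-1::int) ^ k else 0)
      = (\<Sum>k<s. (-1) ^ k - (if odd (s - k) then (-1::int) ^ k else 0))"
    by (rule sum.cong) (auto simp: Suc_diff_le)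
  also have "\<dots> = (\<Sum>k<s. (-1) ^ k) - (\<Sum>k<s. if odd (s - k) then (-1::int) ^ k else 0)"
    by (simp add: sum_subtractf)
  finally have "(\<Sum>k<s. if odd (Suc s - k) then (-1::int) ^ k else 0)
      = (\<Sum>k<s. (-1) ^ k) - (\<Sum>k<s. if odd (s - k) then (-1::int) ^ k else 0)" .
  moreover have "(\<Sum>k<s. (-1::int) ^ k) = (if odd s then 1 else 0)"
    by (induction s) auto
  ultimately show ?case
    using Suc.IH by auto
qed simp

lemma abs_alternating_sum_le:
  fixes a :: int
  assumes a: "a = 1 \<or> a = -1" and K: "K \<subseteq> {..<s}" and sign: "odd s \<or> s = 0 \<or> a = 1"
  shows "\<bar>1 - 4 * a * (\<Sum>k\<in>K. (-1) ^ k)\<bar> \<le> \<bar>1 - 2 * a * (if odd s then int s + 1 else - int s)\<bar>"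
proof -
  note bounds = sum_alternating_bounds[OF K]
  show ?thesis
  proof (cases "odd s")
    case True
    then obtain m where "s = 2 * m + 1"
      by (blast elim: oddE)
    then show ?thesis
      using a bounds by auto
  next
    case False
    then obtain m where "s = 2 * m"
      by blast
    then show ?thesis
      using a sign bounds False by auto
  qed
qed

section \<open>The sequence i_*(B)\<close>

lemma Xplus_not_Xminus: "B \<in> Xplus N \<Longrightarrow> B \<notin> Xminus N"
  unfolding Xplus_def Xminus_def condII_def condIII_def supp_def Let_def by auto

lemma XX_starP: "B \<in> XX N \<Longrightarrow> starP N B"
  unfolding XX_def Xplus_def Xminus_def by blast

lemma between_consecutive_nth:
  fixes xs :: "'a::linorder list"
  assumes ne: "xs \<noteq> []" and y: "y \<notin> set xs" "hd xs < y" "y < last xs"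
  obtains k where "k + 1 < length xs" "xs ! k < y" "y < xs ! (k + 1)"
proof -
  define j where "j = (LEAST j. j < length xs \<and> y < xs ! j)"
  have "length xs - 1 < length xs \<and> y < xs ! (length xs - 1)"
    using ne y(3) by (simp add: last_conv_nth)
  then have j: "j < length xs" "y < xs ! j"
    unfolding j_def by (metis (mono_tags, lifting) LeastI)+
  have "j \<noteq> 0"
  proof
    assume "j = 0"
    then show False
      using j(2) ne y(2) by (simp add: hd_conv_nth)
  qed
  then have "\<not> y < xs ! (j - 1)"
    using j(1) not_less_Least[of "j - 1" "\<lambda>j. j < length xs \<and> y < xs ! j"] unfolding j_def by auto
  moreover have "xs ! (j - 1) \<noteq> y"
    using y(1) j(1) by (metis less_imp_diff_less nth_mem)
  ultimately show thesis
    using that[of "j - 1"] j \<open>j \<noteq> 0\<close> by auto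
qed

(* xs is i_*(B), indexed from 0, and s = |B^0|; chord k is the pair i_{2s-k} i_{k+1} of B^0. *)
locale star_sequence =
  fixes N :: nat and B :: "nat set set" and xs :: "nat list" and s :: nat
  assumes starP_B: "starP N B" and xs_seq: "seq_ok N B xs" and s_def: "s = length xs div 2"
begin

lemma PN_B: "PN N B"
  using starP_B by (rule starP_PN)

lemma length_xs: "length xs = 2 * s"
  using xs_seq unfolding seq_ok_def Let_def s_def by auto

lemma sorted_xs: "sorted_wrt (<) xs"
  using xs_seq unfolding seq_ok_def Let_def by blast

lemma set_xs_range: "set xs \<subseteq> {1..N}"
  using xs_seq unfolding seq_ok_def Let_def by blast

lemma B0_eq: "B0 B = {{xs ! (2 * s - 1 - k), xs ! k} | k. k < s}"
  using xs_seq unfolding seq_ok_def Let_def s_def by blast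

lemma gap_cov0: "k + 1 < 2 * s \<Longrightarrow> k \<noteq> s - 1 \<Longrightarrow> cov0 B {xs ! k + 1..xs ! (k + 1) - 1}"
  using xs_seq unfolding seq_ok_def Let_def s_def by blast

lemma nth_less_iff: "i < 2 * s \<Longrightarrow> j < 2 * s \<Longrightarrow> xs ! i < xs ! j \<longleftrightarrow> i < j"
  using sorted_xs length_xs by (metis not_less_iff_gr_or_eq sorted_wrt_iff_nth_less less_not_sym)

lemma nth_le_iff: "i < 2 * s \<Longrightarrow> j < 2 * s \<Longrightarrow> xs ! i \<le> xs ! j \<longleftrightarrow> i \<le> j"
  using nth_less_iff[of j i] by auto

lemma nth_range: "i < 2 * s \<Longrightarrow> xs ! i \<in> {1..N}"
  using set_xs_range length_xs by (metis nth_mem subsetD)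

lemma set_xs_bounds: "y \<in> set xs \<Longrightarrow> xs ! 0 \<le> y \<and> y \<le> xs ! (2 * s - 1)"
  using nth_le_iff length_xs by (auto simp: in_set_conv_nth)

definition chord :: "nat \<Rightarrow> nat set" where
  "chord k = {xs ! k, xs ! (2 * s - 1 - k)}"

lemma B0_chords: "B0 B = chord ` {..<s}"
  unfolding B0_eq chord_def by auto

lemma chord_less: "k < s \<Longrightarrow> xs ! k < xs ! (2 * s - 1 - k)"
  using nth_less_iff by auto

lemma Min_chord: "k < s \<Longrightarrow> Min (chord k) = xs ! k"
  using chord_less by (simp add: chord_def)

lemma Max_chord: "k < s \<Longrightarrow> Max (chord k) = xs ! (2 * s - 1 - k)"
  using chord_less by (simp add: chord_def)

lemma chord_B0: "k < s \<Longrightarrow> chord k \<in> B0 B"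
  unfolding B0_chords by blast

lemma chord_B: "k < s \<Longrightarrow> chord k \<in> B"
  using chord_B0 B0_eq_diff_B1[OF PN_B] by blast

lemma inj_on_chord: "inj_on chord {..<s}"
proof (rule inj_onI)
  fix k l
  assume k: "k \<in> {..<s}" and l: "l \<in> {..<s}" and eq: "chord k = chord l"
  have "Min (chord k) = Min (chord l)"
    using eq by simp
  then have "xs ! k = xs ! l"
    using k l by (simp add: Min_chord)
  then show "k = l"
    using k l nth_le_iff[of k l] nth_le_iff[of l k] by auto
qed

lemma card_B0: "card (B0 B) = s"
  unfolding B0_chords by (simp add: card_image[OF inj_on_chord])

lemma Union_B0: "\<Union>(B0 B) = set xs"
proof -
  have "set xs = (\<Union>k<s. {xs ! k, xs ! (2 * s - 1 - k)})"
  proof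
    show "set xs \<subseteq> (\<Union>k<s. {xs ! k, xs ! (2 * s - 1 - k)})"
    proof
      fix y
      assume "y \<in> set xs"
      then obtain i where i: "i < 2 * s" "y = xs ! i"
        using length_xs by (metis in_set_conv_nth)
      show "y \<in> (\<Union>k<s. {xs ! k, xs ! (2 * s - 1 - k)})"
      proof (cases "i < s")
        case False
        then have "2 * s - 1 - i < s" "2 * s - 1 - (2 * s - 1 - i) = i"
          using i(1) by auto
        then show ?thesis
          using i(2) by (metis (no_types, lifting) UN_I insertCI lessThan_iff)
      qed (use i in auto)
    qed
  qed (use length_xs in auto)
  then show ?thesis
    unfolding B0_chords chord_def by auto
qed

lemma set_xs_not_B1: "y \<in> set xs \<Longrightarrow> y \<notin> \<Union>(B1 B)"
  using Union_B0 B0_eq_diff_B1[OF PN_B] PN_disjoint[OF PN_B] B1_subset by blast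

lemma nth_parity: "k < s \<Longrightarrow> parity_sign (xs ! k) = parity_sign (xs ! 0) * (-1) ^ k"
proof (induction k)
  case (Suc k)
  have "even (card {xs ! k + 1..xs ! (k + 1) - 1})"
    using Suc.prems by (intro cov0_card_even[OF PN_B] gap_cov0) auto
  moreover have "xs ! k < xs ! (k + 1)"
    using Suc.prems nth_less_iff by auto
  ultimately have "odd (xs ! (k + 1)) \<longleftrightarrow> even (xs ! k)"
    by simp
  then show ?case
    using Suc by (auto simp: parity_sign_def)
qed simp

lemma chord_parity: "k < s \<Longrightarrow> parity_sign (xs ! (2 * s - 1 - k)) = parity_sign (xs ! k)"
proof -
  assume k: "k < s"
  have "even (Max (chord k) - Min (chord k))"
    using B1_iff[OF PN_B chord_B[OF k]] chord_B0[OF k] B0_eq_diff_B1[OF PN_B] by blast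
  then have "odd (xs ! (2 * s - 1 - k)) \<longleftrightarrow> odd (xs ! k)"
    using chord_less[OF k] unfolding Min_chord[OF k] Max_chord[OF k] by presburger
  then show ?thesis
    by (simp add: parity_sign_def)
qed

lemma weight_chord: "k < s \<Longrightarrow> weight (chord k) = 2 * parity_sign (xs ! k)"
  using chord_less[of k] chord_parity[of k] by (simp add: chord_def weight_def)

lemma weight_span:
  assumes "E \<in> span2 B"
  obtains K where "K \<subseteq> {..<s}" "weight E = 2 * parity_sign (xs ! 0) * (\<Sum>k\<in>K. (-1) ^ k)"
proof -
  obtain S where S: "S \<subseteq> B" "E = fsum id S"
    using assms unfolding span2_def by blast
  have "finite S"
    using S(1) PN_B finite_subset by (auto simp: PN_def)
  have E: "E = \<Union>S"
    unfolding S(2) using S(1) PN_disjoint[OF PN_B] by (intro fsum_id_disjoint) blast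
  define K where "K = {k. k < s \<and> chord k \<in> S}"
  have S0: "S \<inter> B0 B = chord ` K"
    unfolding B0_chords K_def by auto
  have "weight E = (\<Sum>X\<in>S. weight X)"
    unfolding E using PN_B S(1) by (rule weight_Union)
  also have "\<dots> = (\<Sum>X\<in>S \<inter> B0 B. weight X)"
    using \<open>finite S\<close> S(1) B0_eq_diff_B1[OF PN_B] weight_B1[OF PN_B]
    by (intro sum.mono_neutral_right) auto
  also have "\<dots> = (\<Sum>k\<in>K. 2 * parity_sign (xs ! k))"
  proof -
    have "inj_on chord K"
      using inj_on_chord by (rule inj_on_subset) (auto simp: K_def)
    then show ?thesis
      unfolding S0 using weight_chord by (simp add: sum.reindex K_def)
  qed
  also have "\<dots> = (\<Sum>k\<in>K. 2 * parity_sign (xs ! 0) * (-1) ^ k)"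
  proof (rule sum.cong)
    fix k
    assume "k \<in> K"
    then show "2 * parity_sign (xs ! k) = 2 * parity_sign (xs ! 0) * (-1) ^ k"
      using nth_parity[of k] by (simp add: K_def)
  qed simp
  finally show thesis
    by (intro that) (auto simp: K_def sum_distrib_left)
qed

lemma mem_dbr_chord_iff:
  "l < s \<Longrightarrow> y \<in> {1..N} \<Longrightarrow> y \<in> dbr N (chord l) \<longleftrightarrow> y \<le> xs ! l \<or> xs ! (2 * s - 1 - l) \<le> y"
  using dbr_B0[OF PN_B chord_B0] Min_chord Max_chord by auto

lemma dbr_containing:
  assumes y: "y \<in> {1..N}" "y \<notin> \<Union>(B1 B)"
  shows "{X\<in>B. y \<in> dbr N X} = chord ` {l. l < s \<and> (y \<le> xs ! l \<or> xs ! (2 * s - 1 - l) \<le> y)}"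
proof -
  have "X \<in> B0 B" if "X \<in> B" "y \<in> dbr N X" for X
    using that y(2) dbr_B1_subset[OF starP_B] B0_eq_diff_B1[OF PN_B] by blast
  then show ?thesis
    using mem_dbr_chord_iff[OF _ y(1)] chord_B unfolding B0_chords by auto
qed

abbreviation depth :: "nat \<Rightarrow> nat" where
  "depth y \<equiv> card {X\<in>B. y \<in> dbr N X}"

lemma depth_eq_card: "y \<in> {1..N} \<Longrightarrow> y \<notin> \<Union>(B1 B) \<Longrightarrow>
    depth y = card {l. l < s \<and> (y \<le> xs ! l \<or> xs ! (2 * s - 1 - l) \<le> y)}"
  unfolding dbr_containing by (rule card_image) (rule inj_on_subset[OF inj_on_chord], auto)

lemma depth_chord:
  assumes k: "k < s" and y: "y \<in> chord k"
  shows "depth y = s - k"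
proof -
  have "y \<in> set xs"
    using y k length_xs unfolding chord_def by auto
  then have "depth y = card {l. l < s \<and> (y \<le> xs ! l \<or> xs ! (2 * s - 1 - l) \<le> y)}"
    using set_xs_range set_xs_not_B1 by (intro depth_eq_card) auto
  also have "{l. l < s \<and> (y \<le> xs ! l \<or> xs ! (2 * s - 1 - l) \<le> y)} = {k..<s}"
    using y k nth_le_iff unfolding chord_def by auto
  finally show ?thesis
    by simp
qed

lemma dbr_mem_Min_iff_Max:
  assumes X: "X \<in> B1 B" and X': "X' \<in> B"
  shows "Min X \<in> dbr N X' \<longleftrightarrow> Max X \<in> dbr N X'"
proof -
  obtain a b where ab: "X = {a, b}" "a < b" "Min X = a" "Max X = b" "ival X = {a..b}"
    using PN_B X by (rule B1_pairE)
  have range: "{a, b} \<subseteq> {1..N}"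
    using PN_subset[OF PN_B] X B1_subset ab(1) by blast
  consider "X' = X" | "X' \<in> B1 B" "X' \<noteq> X" | "X' \<in> B0 B"
    using X' B0_eq_diff_B1[OF PN_B] by blast
  then show ?thesis
  proof cases
    case 1
    then show ?thesis
      using dbr_B1[OF PN_B X] ab by auto
  next
    case 2
    obtain c d where cd: "X' = {c, d}" "c < d" "Min X' = c" "Max X' = d" "ival X' = {c..d}"
      using PN_B 2(1) by (rule B1_pairE)
    have "X \<inter> X' = {}"
      using PN_disjoint[OF PN_B] X 2 B1_subset X' by blast
    then have "a \<noteq> c" "a \<noteq> d" "b \<noteq> c" "b \<noteq> d"
      using ab(1) cd(1) by auto
    moreover have "\<not> (a < c \<and> c < b \<and> b < d)" "\<not> (c < a \<and> a < d \<and> d < b)"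
      using B1_no_crossing[OF starP_B X 2(1)] B1_no_crossing[OF starP_B 2(1) X] ab cd by auto
    ultimately show ?thesis
      using dbr_B1[OF PN_B 2(1)] ab cd by auto
  next
    case 3
    then obtain l where l: "l < s" "X' = chord l"
      unfolding B0_chords by blast
    have "xs ! l \<notin> {a..b}" "xs ! (2 * s - 1 - l) \<notin> {a..b}"
      using set_xs_not_B1 B1_ival_subset[OF starP_B X] ab(5) l(1) length_xs by auto
    then show ?thesis
      using mem_dbr_chord_iff[OF l(1)] range ab l(2) by auto
  qed
qed

lemma istar_eq: "istar N B = xs"
  unfolding istar_def
proof (rule the_equality)
  fix ys
  assume "seq_ok N B ys"
  then interpret other: star_sequence N B ys "length ys div 2"
    using starP_B by unfold_locales simp_all
  have "set ys = set xs"
    using Union_B0 other.Union_B0 by simp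
  then show "ys = xs"
    using sorted_xs other.sorted_xs by (simp add: strict_sorted_equal)
qed (rule xs_seq)

lemma hd_last_xs:
  assumes "s \<noteq> 0"
  shows "hd xs = xs ! 0" "last xs = xs ! (2 * s - 1)"
proof -
  have "xs \<noteq> []"
    using assms length_xs by auto
  then show "hd xs = xs ! 0" "last xs = xs ! (2 * s - 1)"
    using length_xs by (simp_all add: hd_conv_nth last_conv_nth)
qed

lemma free_in_middle_gap:
  assumes y: "y \<notin> \<Union>B" "xs ! 0 < y" "y < xs ! (2 * s - 1)"
  shows "xs ! (s - 1) < y \<and> y < xs ! s"
proof -
  have s0: "s \<noteq> 0"
    using y(2,3) by (cases "s = 0") auto
  have "xs \<noteq> []" "y \<notin> set xs"
    using s0 length_xs y(1) Union_B0 B0_eq_diff_B1[OF PN_B] by auto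
  then obtain k where k: "k + 1 < 2 * s" "xs ! k < y" "y < xs ! (k + 1)"
    using between_consecutive_nth y(2,3) hd_last_xs[OF s0] length_xs by metis
  have "k = s - 1"
  proof (rule ccontr)
    assume "k \<noteq> s - 1"
    then have "{xs ! k + 1..xs ! (k + 1) - 1} \<subseteq> \<Union>(B1 B)"
      using k(1) gap_cov0 cov0_subset_Union_B1[OF starP_B] by blast
    moreover have "y \<in> {xs ! k + 1..xs ! (k + 1) - 1}"
      using k(2,3) by auto
    ultimately show False
      using y(1) B1_subset by blast
  qed
  then show ?thesis
    using k s0 by auto
qed

lemma depth_free:
  assumes y: "y \<in> {1..N}" "y \<notin> \<Union>B"
  shows "depth y = (if xs ! 0 < y \<and> y < xs ! (2 * s - 1) then 0 else s)"
proof -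
  have yB1: "y \<notin> \<Union>(B1 B)"
    using y(2) B1_subset by blast
  show ?thesis
  proof (cases "xs ! 0 < y \<and> y < xs ! (2 * s - 1)")
    case True
    then have gap: "xs ! (s - 1) < y" "y < xs ! s"
      using free_in_middle_gap y(2) by blast+
    have "xs ! l < y \<and> y < xs ! (2 * s - 1 - l)" if "l < s" for l
    proof -
      have "xs ! l \<le> xs ! (s - 1)" "xs ! s \<le> xs ! (2 * s - 1 - l)"
        using that nth_le_iff by auto
      then show ?thesis
        using gap by auto
    qed
    then have "{l. l < s \<and> (y \<le> xs ! l \<or> xs ! (2 * s - 1 - l) \<le> y)} = {}"
      by (auto simp: not_le)
    then show ?thesis
      unfolding if_P[OF True] using y(1) yB1 by (simp add: depth_eq_card)
  next
    case outside: False
    have "y \<le> xs ! l \<or> xs ! (2 * s - 1 - l) \<le> y" if "l < s" for l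
    proof -
      have "xs ! 0 \<le> xs ! l" "xs ! (2 * s - 1 - l) \<le> xs ! (2 * s - 1)"
        using that nth_le_iff by auto
      then show ?thesis
        using outside by auto
    qed
    then have "{l. l < s \<and> (y \<le> xs ! l \<or> xs ! (2 * s - 1 - l) \<le> y)} = {..<s}"
      by auto
    then show ?thesis
      unfolding if_not_P[OF outside] using y(1) yB1 by (simp add: depth_eq_card)
  qed
qed

lemma depth_free_inside:
  assumes "y \<in> {1..N}" "y \<notin> \<Union>B" "s \<noteq> 0" "xs ! 0 \<le> y" "y \<le> xs ! (2 * s - 1)"
  shows "depth y = 0"
proof -
  have "y \<notin> set xs" "xs ! 0 \<in> set xs" "xs ! (2 * s - 1) \<in> set xs"
    using assms(2,3) Union_B0 B0_eq_diff_B1[OF PN_B] length_xs by auto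
  then have "xs ! 0 < y \<and> y < xs ! (2 * s - 1)"
    using assms(4,5) by (metis le_neq_implies_less)
  then show ?thesis
    using depth_free[OF assms(1,2)] by simp
qed

lemma depth_B1_ends: "X \<in> B1 B \<Longrightarrow> depth (Min X) = depth (Max X)"
  by (simp add: dbr_mem_Min_iff_Max cong: conj_cong)

lemma sdiff_fsum_dbr_subset:
  assumes K: "K \<subseteq> {1..N}" and K_free: "\<forall>y\<in>{1..N} - \<Union>B. odd (depth y) \<longleftrightarrow> y \<in> K"
  shows "sdiff (fsum (dbr N) B) K \<subseteq> \<Union>B"
proof
  fix y
  assume y: "y \<in> sdiff (fsum (dbr N) B) K"
  show "y \<in> \<Union>B"
  proof (cases "y \<in> {1..N}")
    case False
    then have "{X\<in>B. y \<in> dbr N X} = {}"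
      using dbr_subset[OF PN_B] by blast
    then have "depth y = 0"
      by (metis card.empty)
    then show ?thesis
      using y False K unfolding mem_sdiff_fsum_iff by auto
  qed (use y K_free in \<open>auto simp: mem_sdiff_fsum_iff\<close>)
qed

lemma weight_sdiff_fsum_dbr_inter_B1:
  assumes X: "X \<in> B1 B" and K_B1: "Min X \<in> K \<longleftrightarrow> Max X \<in> K"
  shows "weight (sdiff (fsum (dbr N) B) K \<inter> X) = 0"
proof -
  obtain a b where ab: "X = {a, b}" "Min X = a" "Max X = b"
    using PN_B X by (rule B1_pairE)
  have "a \<in> sdiff (fsum (dbr N) B) K \<longleftrightarrow> b \<in> sdiff (fsum (dbr N) B) K"
    using K_B1 depth_B1_ends[OF X] ab unfolding mem_sdiff_fsum_iff by auto
  then have "sdiff (fsum (dbr N) B) K \<inter> X = {} \<or> sdiff (fsum (dbr N) B) K \<inter> X = X"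
    using ab(1) by auto
  then show ?thesis
    using weight_B1[OF PN_B X] by (auto simp: weight_def)
qed

lemma weight_sdiff_fsum_dbr_inter_chord:
  assumes k: "k < s" and K_xs: "set xs \<inter> K = {}"
  shows "weight (sdiff (fsum (dbr N) B) K \<inter> chord k)
    = 2 * parity_sign (xs ! 0) * (if odd (s - k) then (-1) ^ k else 0)"
proof -
  have "y \<in> sdiff (fsum (dbr N) B) K \<longleftrightarrow> odd (s - k)" if "y \<in> chord k" for y
  proof -
    have "y \<in> set xs"
      using that k length_xs unfolding chord_def by auto
    then show ?thesis
      unfolding mem_sdiff_fsum_iff using depth_chord[OF k that] K_xs by auto
  qed
  then have "sdiff (fsum (dbr N) B) K \<inter> chord k = (if odd (s - k) then chord k else {})"
    by auto
  then show ?thesis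
    using weight_chord[OF k] nth_parity[OF k] by (simp add: weight_def)
qed

(* Every value of 'epsilon has this form, with K = {}, [u_B, N] or {N} + [1, u_B]. *)
lemma weight_sdiff_fsum_dbr:
  assumes K: "K \<subseteq> {1..N}" and K_B1: "\<forall>X\<in>B1 B. Min X \<in> K \<longleftrightarrow> Max X \<in> K"
    and K_xs: "set xs \<inter> K = {}" and K_free: "\<forall>y\<in>{1..N} - \<Union>B. odd (depth y) \<longleftrightarrow> y \<in> K"
  shows "weight (sdiff (fsum (dbr N) B) K) = parity_sign (xs ! 0) * (if odd s then int s + 1 else - int s)"
proof -
  let ?M = "sdiff (fsum (dbr N) B) K"
  have "weight ?M = (\<Sum>X\<in>B. weight (?M \<inter> X))"
    using PN_B sdiff_fsum_dbr_subset[OF K K_free] by (rule weight_eq_sum_inter)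
  also have "\<dots> = (\<Sum>X\<in>B0 B. weight (?M \<inter> X))"
    using PN_B B0_eq_diff_B1[OF PN_B] weight_sdiff_fsum_dbr_inter_B1 K_B1
    by (intro sum.mono_neutral_right) (auto simp: PN_def)
  also have "\<dots> = (\<Sum>k<s. 2 * parity_sign (xs ! 0) * (if odd (s - k) then (-1) ^ k else 0))"
    unfolding B0_chords using weight_sdiff_fsum_dbr_inter_chord[OF _ K_xs]
    by (simp add: sum.reindex[OF inj_on_chord])
  also have "\<dots> = parity_sign (xs ! 0) * (2 * (\<Sum>k<s. if odd (s - k) then (-1) ^ k else 0))"
    by (simp add: sum_distrib_left algebra_simps)
  finally show ?thesis
    unfolding sum_alternating_odd_distance .
qed

lemma weight_fsum_dbr:
  assumes cov: "s = 0 \<or> cov0 B {1..xs ! 0 - 1} \<and> cov0 B {xs ! (2 * s - 1) + 1..N}"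
  shows "weight (fsum (dbr N) B) = parity_sign (xs ! 0) * (if odd s then int s + 1 else - int s)"
proof -
  have "depth y = 0" if y: "y \<in> {1..N}" "y \<notin> \<Union>B" for y
  proof (cases "s = 0")
    case False
    then have "y \<notin> {1..xs ! 0 - 1}" "y \<notin> {xs ! (2 * s - 1) + 1..N}"
      using cov cov0_free[OF starP_B _ y(2)] by blast+
    moreover have "1 \<le> xs ! 0"
      using nth_range False by auto
    ultimately show ?thesis
      using y False by (intro depth_free_inside) auto
  qed (use depth_free[OF y] in simp)
  then show ?thesis
    using weight_sdiff_fsum_dbr[of "{}"] by (simp add: sdiff_empty)
qed

lemma weight_sdiff_outer:
  assumes odd: "odd s" and K: "K \<subseteq> {1..N}" and K_B1: "\<forall>X\<in>B1 B. Min X \<in> K \<longleftrightarrow> Max X \<in> K"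
    and K_xs: "set xs \<inter> K = {}"
    and K_free: "\<forall>y\<in>{1..N} - \<Union>B. y \<in> K \<longleftrightarrow> y < xs ! 0 \<or> xs ! (2 * s - 1) < y"
  shows "weight (sdiff (fsum (dbr N) B) K) = parity_sign (xs ! 0) * (int s + 1)"
proof -
  have s0: "s \<noteq> 0"
    using odd by presburger
  have "odd (depth y) \<longleftrightarrow> y \<in> K" if y: "y \<in> {1..N}" "y \<notin> \<Union>B" for y
  proof (cases "y < xs ! 0 \<or> xs ! (2 * s - 1) < y")
    case True
    then show ?thesis
      using depth_free[OF y] K_free y odd by auto
  next
    case False
    then show ?thesis
      using depth_free_inside[OF y s0] K_free y by auto
  qed
  then have "weight (sdiff (fsum (dbr N) B) K) = parity_sign (xs ! 0) * (if odd s then int s + 1 else - int s)"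
    using K K_B1 K_xs by (intro weight_sdiff_fsum_dbr) auto
  then show ?thesis
    using odd by simp
qed

lemma left_gap_ends_free:
  assumes "s \<noteq> 0"
  shows "1 - 1 \<notin> \<Union>(B1 B)" "xs ! 0 - 1 + 1 \<notin> \<Union>(B1 B)"
proof -
  show "1 - 1 \<notin> \<Union>(B1 B)"
    using PN_Union_subset[OF PN_B] B1_subset by fastforce
  have "xs ! 0 \<in> set xs" "1 \<le> xs ! 0"
    using assms length_xs nth_range by auto
  then show "xs ! 0 - 1 + 1 \<notin> \<Union>(B1 B)"
    using set_xs_not_B1 by simp
qed

lemma right_gap_ends_free:
  assumes "N \<notin> \<Union>B" "s \<noteq> 0"
  shows "xs ! (2 * s - 1) + 1 - 1 \<notin> \<Union>(B1 B)" "N - 1 + 1 \<notin> \<Union>(B1 B)"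
proof -
  have "xs ! (2 * s - 1) \<in> set xs"
    using assms(2) length_xs by auto
  then show "xs ! (2 * s - 1) + 1 - 1 \<notin> \<Union>(B1 B)"
    using set_xs_not_B1 by simp
  have "1 \<le> N"
    using assms(2) nth_range by fastforce
  then show "N - 1 + 1 \<notin> \<Union>(B1 B)"
    using assms(1) B1_subset by auto
qed

lemma last_xs_less:
  assumes "N \<notin> \<Union>B" "s \<noteq> 0"
  shows "xs ! (2 * s - 1) < N"
proof -
  have "xs ! (2 * s - 1) \<in> set xs"
    using assms(2) length_xs by auto
  moreover have "N \<notin> set xs"
    using assms(1) Union_B0 B0_eq_diff_B1[OF PN_B] by blast
  ultimately show ?thesis
    using set_xs_range le_neq_implies_less by fastforce
qed

lemma weight_sdiff_caseI:
  assumes N: "N \<notin> \<Union>B" and odd: "odd s" and c3: "cov0 B {xs ! (2 * s - 1) + 1..N - 1}"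
    and sp: "split_point B 1 (xs ! 0 - 1) u"
  shows "weight (sdiff (sdiff (fsum (dbr N) B) {N}) {1..u}) = parity_sign (xs ! 0) * (int s + 1)"
proof -
  let ?L = "xs ! (2 * s - 1)"
  have s0: "s \<noteq> 0"
    using odd by presburger
  have L: "xs ! 0 \<le> ?L" "?L < N"
    using set_xs_bounds[of ?L] s0 length_xs last_xs_less[OF N s0] by auto
  have u: "1 \<le> u" "u < xs ! 0" and c2: "cov0 B {u + 1..xs ! 0 - 1}"
    using sp unfolding split_point_def by auto
  have u_free: "u \<notin> \<Union>(B1 B)"
    using split_point_free[OF starP_B sp left_gap_ends_free[OF s0]] .
  have "weight (sdiff (fsum (dbr N) B) ({N} \<union> {1..u})) = parity_sign (xs ! 0) * (int s + 1)"
  proof (rule weight_sdiff_outer[OF odd])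
    show "{N} \<union> {1..u} \<subseteq> {1..N}"
      using u L by auto
    show "\<forall>X\<in>B1 B. Min X \<in> {N} \<union> {1..u} \<longleftrightarrow> Max X \<in> {N} \<union> {1..u}"
    proof
      fix X
      assume X: "X \<in> B1 B"
      obtain a b where ab: "X = {a, b}" "Min X = a" "Max X = b"
        using PN_B X by (rule B1_pairE)
      have "{a, b} \<subseteq> {1..N}" "N \<notin> {a, b}"
        using PN_subset[OF PN_B] X B1_subset N ab(1) by blast+
      then show "Min X \<in> {N} \<union> {1..u} \<longleftrightarrow> Max X \<in> {N} \<union> {1..u}"
        using B1_ends_same_side(2)[OF starP_B X u_free] ab by auto
    qed
    show "set xs \<inter> ({N} \<union> {1..u}) = {}"
      using set_xs_bounds u L by fastforce
    show "\<forall>y\<in>{1..N} - \<Union>B. y \<in> {N} \<union> {1..u} \<longleftrightarrow> y < xs ! 0 \<or> ?L < y"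
    proof
      fix y
      assume y: "y \<in> {1..N} - \<Union>B"
      then have "y \<notin> {u + 1..xs ! 0 - 1}" "y \<notin> {?L + 1..N - 1}"
        using cov0_free[OF starP_B c2] cov0_free[OF starP_B c3] by auto
      then show "y \<in> {N} \<union> {1..u} \<longleftrightarrow> y < xs ! 0 \<or> ?L < y"
        using y u L by auto
    qed
  qed
  then show ?thesis
    using u L by (simp add: sdiff_sdiff)
qed

lemma weight_sdiff_caseII:
  assumes N: "N \<notin> \<Union>B" and odd: "odd s" and c0: "cov0 B {1..xs ! 0 - 1}"
    and sp: "split_point B (xs ! (2 * s - 1) + 1) (N - 1) u"
  shows "weight (sdiff (fsum (dbr N) B) {u..N}) = parity_sign (xs ! 0) * (int s + 1)"
proof (rule weight_sdiff_outer[OF odd])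
  let ?L = "xs ! (2 * s - 1)"
  have s0: "s \<noteq> 0"
    using odd by presburger
  have "1 \<le> xs ! 0"
    using s0 nth_range by auto
  have u: "?L < u" "u < N" and c1: "cov0 B {?L + 1..u - 1}"
    using sp last_xs_less[OF N s0] unfolding split_point_def by auto
  have u_free: "u \<notin> \<Union>(B1 B)"
    using split_point_free[OF starP_B sp right_gap_ends_free[OF N s0]] .
  show "{u..N} \<subseteq> {1..N}"
    using u \<open>1 \<le> xs ! 0\<close> by auto
  show "\<forall>X\<in>B1 B. Min X \<in> {u..N} \<longleftrightarrow> Max X \<in> {u..N}"
  proof
    fix X
    assume X: "X \<in> B1 B"
    obtain a b where ab: "X = {a, b}" "Min X = a" "Max X = b"
      using PN_B X by (rule B1_pairE)
    have "{a, b} \<subseteq> {1..N}"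
      using PN_subset[OF PN_B] X B1_subset ab(1) by blast
    then show "Min X \<in> {u..N} \<longleftrightarrow> Max X \<in> {u..N}"
      using B1_ends_same_side(1)[OF starP_B X u_free] ab by auto
  qed
  show "set xs \<inter> {u..N} = {}"
    using set_xs_bounds u by fastforce
  show "\<forall>y\<in>{1..N} - \<Union>B. y \<in> {u..N} \<longleftrightarrow> y < xs ! 0 \<or> ?L < y"
  proof
    fix y
    assume y: "y \<in> {1..N} - \<Union>B"
    then have "y \<notin> {1..xs ! 0 - 1}" "y \<notin> {?L + 1..u - 1}"
      using cov0_free[OF starP_B c0] cov0_free[OF starP_B c1] by auto
    then show "y \<in> {u..N} \<longleftrightarrow> y < xs ! 0 \<or> ?L < y"
      using y u \<open>1 \<le> xs ! 0\<close> by auto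
  qed
qed

lemma uB_caseI:
  assumes s0: "s \<noteq> 0" and cI: "caseI N B"
  shows "split_point B 1 (xs ! 0 - 1) (uB N B)"
proof -
  have "\<not> caseII N B"
    using not_caseI_and_caseII[OF starP_B] cI by blast
  then have uB: "uB N B = (THE u. split_point B 1 (xs ! 0 - 1) u)"
    using cI unfolding uB_def Let_def istar_eq hd_last_xs[OF s0] split_point_def by simp
  have "cov1 B {1..xs ! 0 - 1}"
    using cI unfolding caseI_def Let_def istar_eq hd_last_xs[OF s0] by blast
  then obtain u where "split_point B 1 (xs ! 0 - 1) u"
    by (rule cov1_split_point) simp
  then have "\<exists>!u. split_point B 1 (xs ! 0 - 1) u"
    using split_point_unique[OF starP_B left_gap_ends_free[OF s0]] by blast
  then show ?thesis
    unfolding uB by (rule theI')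
qed

lemma uB_caseII:
  assumes N: "N \<notin> \<Union>B" and s0: "s \<noteq> 0" and cII: "caseII N B"
  shows "split_point B (xs ! (2 * s - 1) + 1) (N - 1) (uB N B)"
proof -
  have "\<not> caseI N B"
    using not_caseI_and_caseII[OF starP_B] cII by blast
  then have uB: "uB N B = (THE u. split_point B (xs ! (2 * s - 1) + 1) (N - 1) u)"
    using cII unfolding uB_def Let_def istar_eq hd_last_xs[OF s0] split_point_def by simp
  have "cov1 B {xs ! (2 * s - 1) + 1..N - 1}"
    using cII unfolding caseII_def Let_def istar_eq hd_last_xs[OF s0] by blast
  then obtain u where "split_point B (xs ! (2 * s - 1) + 1) (N - 1) u"
    by (rule cov1_split_point) simp
  then have "\<exists>!u. split_point B (xs ! (2 * s - 1) + 1) (N - 1) u"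
    using split_point_unique[OF starP_B right_gap_ends_free[OF N s0]] by blast
  then show ?thesis
    unfolding uB by (rule theI')
qed

lemma Xplus_condII:
  assumes "B \<in> Xplus N"
  shows "N \<notin> \<Union>B" "s \<noteq> 0 \<Longrightarrow> odd s" "s \<noteq> 0 \<Longrightarrow> caseI N B \<or> caseII N B"
  using assms card_B0 unfolding Xplus_def condII_def supp_def Let_def by auto

lemma weight_eps'_caseI:
  assumes Bp: "B \<in> Xplus N" and s0: "s \<noteq> 0" and cI: "caseI N B"
  shows "odd (uB N B)" "parity_sign (xs ! 0) = -1" "weight (eps' N B) = - (int s + 1)"
proof -
  define u where "u = uB N B"
  have sp: "split_point B 1 (xs ! 0 - 1) u"
    unfolding u_def using s0 cI by (rule uB_caseI)
  then have c1: "cov0 B {1..u - 1}" and "1 \<le> u"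
    unfolding split_point_def by auto
  then show odd_u: "odd (uB N B)"
    using cov0_card_even[OF PN_B c1] unfolding u_def by simp
  have "cov1 B {1..xs ! 0 - 1}" and c3: "cov0 B {xs ! (2 * s - 1) + 1..N - 1}"
    using cI unfolding caseI_def Let_def istar_eq hd_last_xs[OF s0] by auto
  moreover have "1 \<le> xs ! 0"
    using nth_range s0 by auto
  ultimately show w0: "parity_sign (xs ! 0) = -1"
    using cov1_card_odd[OF PN_B] by (fastforce simp: parity_sign_def)
  have odd: "odd s"
    using Xplus_condII(2)[OF Bp s0] .
  have "eps' N B = sdiff (sdiff (fsum (dbr N) B) {N}) {1..u}"
    using Xplus_not_Xminus[OF Bp] Bp odd odd_u s0 unfolding eps'_def card_B0 u_def by simp
  then show "weight (eps' N B) = - (int s + 1)"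
    using weight_sdiff_caseI[OF Xplus_condII(1)[OF Bp] odd c3 sp] w0 by simp
qed

lemma weight_eps'_caseII:
  assumes N: "odd N" and Bp: "B \<in> Xplus N" and s0: "s \<noteq> 0" and cII: "caseII N B"
  shows "even (uB N B)" "parity_sign (xs ! 0) = 1" "weight (eps' N B) = int s + 1"
proof -
  define u where "u = uB N B"
  have sp: "split_point B (xs ! (2 * s - 1) + 1) (N - 1) u"
    unfolding u_def using Xplus_condII(1)[OF Bp] s0 cII by (rule uB_caseII)
  then have c2: "cov0 B {u + 1..N - 1}" and "u \<le> N - 1"
    unfolding split_point_def by auto
  then show even_u: "even (uB N B)"
    using cov0_card_even[OF PN_B c2] N unfolding u_def by simp presburger
  have c0: "cov0 B {1..xs ! 0 - 1}"
    using cII unfolding caseII_def Let_def istar_eq hd_last_xs[OF s0] by auto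
  moreover have "1 \<le> xs ! 0"
    using nth_range s0 by auto
  ultimately show w0: "parity_sign (xs ! 0) = 1"
    using cov0_card_even[OF PN_B c0] by (simp add: parity_sign_def)
  have odd: "odd s"
    using Xplus_condII(2)[OF Bp s0] .
  have "eps' N B = sdiff (fsum (dbr N) B) {u..N}"
    using Xplus_not_Xminus[OF Bp] Bp odd even_u s0 unfolding eps'_def card_B0 u_def by simp
  then show "weight (eps' N B) = int s + 1"
    using weight_sdiff_caseII[OF Xplus_condII(1)[OF Bp] odd c0 sp] w0 by simp
qed

lemma weight_eps'_Xminus:
  assumes "B \<in> Xminus N"
  shows "weight (eps' N B) = parity_sign (xs ! 0) * (if odd s then int s + 1 else - int s)"
    and "s = 0 \<or> parity_sign (xs ! 0) = 1"
proof -
  have "condI N B"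
    using assms unfolding Xminus_def condIII_def by blast
  then have cov: "s = 0 \<or> cov0 B {1..xs ! 0 - 1} \<and> cov0 B {xs ! (2 * s - 1) + 1..N}"
    unfolding condI_def Let_def istar_eq card_B0 using hd_last_xs by auto
  moreover have "eps' N B = fsum (dbr N) B"
    using assms unfolding eps'_def by simp
  ultimately show "weight (eps' N B) = parity_sign (xs ! 0) * (if odd s then int s + 1 else - int s)"
    by (simp add: weight_fsum_dbr)
  show "s = 0 \<or> parity_sign (xs ! 0) = 1"
  proof (cases "s = 0")
    case False
    then have "even (xs ! 0 - 1)" "1 \<le> xs ! 0"
      using cov cov0_card_even[OF PN_B] nth_range by fastforce+
    then show ?thesis
      by (simp add: parity_sign_def)
  qed simp
qed

lemma weight_eps'_Xplus:
  assumes N: "odd N" and Bp: "B \<in> Xplus N"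
  shows "weight (eps' N B) = parity_sign (xs ! 0) * (if odd s then int s + 1 else - int s)"
    and "odd s \<or> s = 0"
proof -
  have "weight (eps' N B) = parity_sign (xs ! 0) * (if odd s then int s + 1 else - int s)
      \<and> (odd s \<or> s = 0)"
  proof (cases "s = 0")
    case True
    then have "eps' N B = fsum (dbr N) B"
      using Bp unfolding eps'_def card_B0 by simp
    then show ?thesis
      using weight_fsum_dbr True by simp
  next
    case False
    then have "odd s" "caseI N B \<or> caseII N B"
      using Xplus_condII[OF Bp] by auto
    then show ?thesis
      using weight_eps'_caseI[OF Bp False] weight_eps'_caseII[OF N Bp False] by auto
  qed
  then show "weight (eps' N B) = parity_sign (xs ! 0) * (if odd s then int s + 1 else - int s)"
    and "odd s \<or> s = 0"
    by auto
qed

lemma weight_eps'_XX: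
  assumes "odd N" "B \<in> XX N"
  shows "weight (eps' N B) = parity_sign (xs ! 0) * (if odd s then int s + 1 else - int s)"
    and "odd s \<or> s = 0 \<or> parity_sign (xs ! 0) = 1"
  using assms weight_eps'_Xminus weight_eps'_Xplus unfolding XX_def by auto

lemma weight_span_le_eps':
  assumes N: "odd N" and B: "B \<in> XX N" and E: "E \<in> span2 B"
  shows "\<bar>1 - 2 * weight E\<bar> \<le> \<bar>1 - 2 * weight (eps' N B)\<bar>"
proof -
  obtain K where K: "K \<subseteq> {..<s}" "weight E = 2 * parity_sign (xs ! 0) * (\<Sum>k\<in>K. (-1) ^ k)"
    using E by (rule weight_span)
  have "\<bar>1 - 4 * parity_sign (xs ! 0) * (\<Sum>k\<in>K. (-1) ^ k)\<bar>
      \<le> \<bar>1 - 2 * parity_sign (xs ! 0) * (if odd s then int s + 1 else - int s)\<bar>"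
    using parity_sign_cases K(1) weight_eps'_XX(2)[OF N B] by (rule abs_alternating_sum_le)
  then show ?thesis
    unfolding K(2) weight_eps'_XX(1)[OF N B] by (simp add: algebra_simps)
qed

lemma weight_eps'_Xtp:
  assumes N: "odd N" and B: "B \<in> Xtp N t"
  shows "weight (eps' N B) = - t"
proof -
  have Bp: "B \<in> Xplus N"
    using B unfolding Xtp_def by blast
  consider "t = 0" "s = 0" | "t \<ge> 2" "int s = t - 1" "odd (uB N B)"
    | "t \<le> -2" "int s = - t - 1" "even (uB N B)"
    using B card_B0 unfolding Xtp_def by auto
  then show ?thesis
  proof cases
    case 1
    then show ?thesis
      using weight_eps'_Xplus(1)[OF N Bp] by simp
  next
    case 2
    then have "s \<noteq> 0" "\<not> caseII N B"
      using weight_eps'_caseII(1)[OF N Bp] by auto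
    then show ?thesis
      using 2 Xplus_condII(3)[OF Bp] weight_eps'_caseI(3)[OF Bp] by auto
  next
    case 3
    then have "s \<noteq> 0" "\<not> caseI N B"
      using weight_eps'_caseI(1)[OF Bp] by auto
    then show ?thesis
      using 3 Xplus_condII(3)[OF Bp] weight_eps'_caseII(3)[OF N Bp] by auto
  qed
qed

end

section \<open>Monotonicity along the order\<close>

lemma star_sequence_exists:
  assumes "starP N B"
  obtains xs where "star_sequence N B xs (length xs div 2)"
  using assms unfolding starP_def by (auto intro: that simp: star_sequence_def starP_def)

lemma weight_span_le_eps':
  assumes "odd N" "B \<in> XX N" "E \<in> span2 B"
  shows "\<bar>1 - 2 * weight E\<bar> \<le> \<bar>1 - 2 * weight (eps' N B)\<bar>"
proof -
  obtain xs where "star_sequence N B xs (length xs div 2)"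
    using XX_starP[OF assms(2)] by (rule star_sequence_exists)
  then show ?thesis
    using assms by (rule star_sequence.weight_span_le_eps')
qed

lemma weight_eps'_Xtp:
  assumes "odd N" "B \<in> Xtp N t"
  shows "weight (eps' N B) = - t"
proof -
  have "starP N B"
    using assms(2) unfolding Xtp_def Xplus_def by blast
  then obtain xs where "star_sequence N B xs (length xs div 2)"
    by (rule star_sequence_exists)
  then show ?thesis
    using assms by (rule star_sequence.weight_eps'_Xtp)
qed

lemma preceq_weight_eps'_mono:
  assumes N: "odd N" and "preceq N B' B"
  shows "\<bar>1 - 2 * weight (eps' N B')\<bar> \<le> \<bar>1 - 2 * weight (eps' N B)\<bar>"
proof -
  have "(step N)\<^sup>*\<^sup>* B' B"
    using assms(2) unfolding preceq_def by blast
  then show ?thesis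
  proof (induction rule: rtranclp_induct)
    case (step C D)
    then have "\<bar>1 - 2 * weight (eps' N C)\<bar> \<le> \<bar>1 - 2 * weight (eps' N D)\<bar>"
      using weight_span_le_eps'[OF N] unfolding step_def by blast
    then show ?case
      using step.IH by linarith
  qed simp
qed

theorem mainTheorem8:
  fixes N :: nat and t t' :: int and B B' :: "nat set set"
  assumes "N \<ge> 3" and "odd N"
    and "even t" and "even t'"
    and "B' \<in> Xtp N t'" and "B \<in> Xtp N t"
    and "preceq N B' B"
    and "t < 0"
  shows "t' = t \<or> \<bar>t'\<bar> < \<bar>t\<bar>"
proof -
  have "\<bar>1 + 2 * t'\<bar> \<le> \<bar>1 + 2 * t\<bar>"
    using preceq_weight_eps'_mono[OF assms(2,7)] weight_eps'_Xtp[OF assms(2)] assms(5,6) by simp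
  then show ?thesis
    using assms(8) by linarith
qed

end
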